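(* Consider the local time-stepping Adams–Bashforth scheme of order $k$ described in the context, and suppose that for each set $s$ the right-hand side splits as $\mathbf{D}^s(\mathbf{y}^1,\ldots,\mathbf{y}^S)=\mathbf{V}^s(\mathbf{y}^s)+\mathbf{B}^s(\mathbf{y}^1,\ldots,\mathbf{y}^S)$, where $\mathbf{V}^s$ depends only on $\mathbf{y}^s$. Then for every set $s$ and step index $m$ (large enough that all indices exist), $$\mathbf{y}^s_{m+1}-\mathbf{y}^s_m=\Delta t^s_m\sum_{j=0}^{k-1}\alpha^s_{mj}\,\mathbf{V}^s(\mathbf{y}^s_{m-j})+\sum_{n=n^s(m)}^{n^s(m+1)-1}\ \sum_{q^1=m^1(n)-(k-1)}^{m^1(n)}\cdots\sum_{q^S=m^S(n)-(k-1)}^{m^S(n)}\beta_{n;q^1\cdots q^S}\,\mathbf{B}^s(\mathbf{y}^1_{q^1},\ldots,\mathbf{y}^S_{q^S}),$$ where $\Delta t^s_m=t^s_{m+1}-t^s_m$ and $\alpha^s_{mj}=\frac{1}{\Delta t^s_m}\int_{t^s_m}^{t^s_{m+1}}\ell_j(t;t^s_m,t^s_{m-1},\ldots,t^s_{m-(k-1)})\,dt$ are the standard (variable-step) Adams–Bashforth coefficients for the evaluation times of set $s$. That is, the volume part is advanced by the standard global Adams–Bashforth rule on set $s$'s own times, and only the coupling terms use the local time-stepping coefficients.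
   Context: We solve an autonomous system $\frac{d\mathbf{y}}{dt}=\mathbf{D}(\mathbf{y})$, $\mathbf{y}\in\mathbb{R}^N$. The components of $\mathbf{y}$ are partitioned into $S$ sets, $\mathbf{y}=(\mathbf{y}^1,\ldots,\mathbf{y}^S)$, and $\mathbf{D}^s$ denotes the components of $\mathbf{D}$ belonging to set $s$. Set $s$ is evaluated at strictly increasing times $t^s_0<t^s_1<\cdots$, and $\mathbf{y}^s_q$ denotes the numerical value of $\mathbf{y}^s$ at time $t^s_q$. Let $\tilde t_0<\tilde t_1<\cdots$ be the increasing enumeration of the union of all evaluation times of all sets, $\Delta\tilde t_n=\tilde t_{n+1}-\tilde t_n$. For each $s,n$ let $m^s(n)$ be the index with $t^s_{m^s(n)}\le\tilde t_n<t^s_{m^s(n)+1}$, and let $n^s(m)$ be defined by $\tilde t_{n^s(m)}=t^s_m$. Lagrange polynomials: $\ell_j(t;\tau_0,\ldots,\tau_{k-1})=\prod_{i\ne j}\frac{t-\tau_i}{\tau_j-\tau_i}$. Adams–Bashforth coefficients for the merged sequence: $\tilde\alpha_{ni}=\frac{1}{\Delta\tilde t_n}\int_{\tilde t_n}^{\tilde t_{n+1}}\ell_i(t;\tilde t_n,\ldots,\tilde t_{n-(k-1)})\,dt$. Define $\beta_{n;q^1\cdots q^S}=\Delta\tilde t_n\sum_{i=0}^{k-1}\tilde\alpha_{ni}\prod_{s=1}^S\ell_{m^s(n)-q^s}\big(\tilde t_{n-i};t^s_{m^s(n)},\ldots,t^s_{m^s(n)-(k-1)}\big)$. The scheme updates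 set $s$ from $t^s_m$ to $t^s_{m+1}$ by $\mathbf{y}^s_{m+1}=\mathbf{y}^s_m+\sum_{n=n^s(m)}^{n^s(m+1)-1}\sum_{q^1=m^1(n)-(k-1)}^{m^1(n)}\cdots\sum_{q^S=m^S(n)-(k-1)}^{m^S(n)}\beta_{n;q^1\cdots q^S}\,\mathbf{D}^s(\mathbf{y}^1_{q^1},\ldots,\mathbf{y}^S_{q^S})$. *)

theory Defs
  imports "HOL-Analysis.Analysis" "HOL-Library.FuncSet"
begin

definition lagrange :: "(nat \<Rightarrow> real) \<Rightarrow> nat \<Rightarrow> nat \<Rightarrow> real \<Rightarrow> real" where
  "lagrange tau k j x = (\<Prod>i\<in>{..<k} - {j}. (x - tau i) / (tau j - tau i))"

definition ab_coeff :: "(nat \<Rightarrow> real) \<Rightarrow> nat \<Rightarrow> nat \<Rightarrow> nat \<Rightarrow> real" where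
  "ab_coeff T k n i =
     integral {T n..T (Suc n)} (lagrange (\<lambda>j. T (n - j)) k i) / (T (Suc n) - T n)"

text \<open>m^s(n): the index m with T m \<le> x < T (m+1), applied to x = merged time.\<close>
definition mIdx :: "(nat \<Rightarrow> real) \<Rightarrow> real \<Rightarrow> nat" where
  "mIdx T x = (THE m. T m \<le> x \<and> x < T (Suc m))"

text \<open>n^s(m): the index n of the merged sequence with tt n = x (x = t^s_m).\<close>
definition nIdx :: "(nat \<Rightarrow> real) \<Rightarrow> real \<Rightarrow> nat" where
  "nIdx tt x = (THE n. tt n = x)"

text \<open>Local time-stepping coefficient beta_{n; q^0 ... q^(S-1)}; sets are indexed 0..S-1
  and the multi-index is a function q on {..<S}.\<close>
definition lts_beta :: "nat \<Rightarrow> nat \<Rightarrow> (nat \<Rightarrow> nat \<Rightarrow> real) \<Rightarrow> (nat \<Rightarrow> real)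
    \<Rightarrow> nat \<Rightarrow> (nat \<Rightarrow> nat) \<Rightarrow> real" where
  "lts_beta S k t tt n q =
     (tt (Suc n) - tt n) *
     (\<Sum>i<k. ab_coeff tt k n i *
        (\<Prod>s<S. lagrange (\<lambda>j. t s (mIdx (t s) (tt n) - j)) k
                   (mIdx (t s) (tt n) - q s) (tt (n - i))))"

definition lts_qset :: "nat \<Rightarrow> nat \<Rightarrow> (nat \<Rightarrow> nat \<Rightarrow> real) \<Rightarrow> (nat \<Rightarrow> real)
    \<Rightarrow> nat \<Rightarrow> (nat \<Rightarrow> nat) set" where
  "lts_qset S k t tt n =
     PiE {..<S} (\<lambda>s. {mIdx (t s) (tt n) - (k - 1) .. mIdx (t s) (tt n)})"

end

theory Submission
  imports Defs "HOL-Computational_Algebra.Polynomial"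
begin

text \<open>For every set r other than s, the Lagrange weights of r sum to one over q r, so in
  the volume term V s (y s (q s)) the sums over all other sets collapse. What remains at a
  merged step n is the Adams-Bashforth quadrature on the merged times, applied to the Lagrange
  basis polynomials of set s at the nodes t s m, ..., t s (m - (k - 1)). These have degree
  k - 1, so the quadrature is exact and gives their integral over [tt n, tt (n + 1)]; summing
  over the merged steps between t s m and t s (m + 1) gives the integral over the whole step
  of set s, which is the standard coefficient times the step size.\<close>

definition lagrange_poly :: "(nat \<Rightarrow> real) \<Rightarrow> nat \<Rightarrow> nat \<Rightarrow> real poly" where
  "lagrange_poly tau k j =
     (\<Prod>i\<in>{..<k} - {j}. [: - tau i / (tau j - tau i), 1 / (tau j - tau i) :])"

lemma poly_lagrange_poly [simp]: "poly (lagrange_poly tau k j) = lagrange tau k j"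
  unfolding lagrange_poly_def lagrange_def poly_prod
  by (rule ext, rule prod.cong) (auto simp: diff_divide_distrib)

lemma degree_lagrange_poly:
  assumes "j < k"
  shows "degree (lagrange_poly tau k j) < k"
proof -
  have "degree (lagrange_poly tau k j) \<le> (\<Sum>i\<in>{..<k} - {j}. 1)"
    unfolding lagrange_poly_def
    by (rule order.trans[OF degree_prod_sum_le sum_mono]) auto
  also have "\<dots> < k" using assms by simp
  finally show ?thesis .
qed

lemma continuous_on_lagrange: "continuous_on A (lagrange tau k j)"
  unfolding lagrange_def divide_inverse by (intro continuous_intros)

lemma lagrange_at_node:
  assumes "inj_on tau {..<k}" "i < k" "l < k"
  shows "lagrange tau k i (tau l) = (if i = l then 1 else 0)"
proof (cases "i = l")
  case True
  with assms have "lagrange tau k i (tau l) = (\<Prod>j\<in>{..<k} - {i}. 1)"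
    unfolding lagrange_def by (intro prod.cong) (auto simp: inj_on_def)
  with True show ?thesis by simp
next
  case False
  with assms show ?thesis
    unfolding lagrange_def by (intro trans[OF prod_zero]) auto
qed

lemma lagrange_interpolation_exact:
  assumes inj: "inj_on tau {..<k}" and deg: "degree p < k"
  shows "(\<Sum>i<k. poly p (tau i) * lagrange tau k i x) = poly p x"
proof -
  define q where "q = (\<Sum>i<k. smult (poly p (tau i)) (lagrange_poly tau k i))"
  have poly_q: "poly q z = (\<Sum>i<k. poly p (tau i) * lagrange tau k i z)" for z
    by (simp add: q_def poly_sum)
  have "q = p"
  proof (rule poly_eqI_degree[where A = "tau ` {..<k}"])
    show "poly q z = poly p z" if "z \<in> tau ` {..<k}" for z
      using that inj by (auto simp: poly_q lagrange_at_node if_distrib cong: if_cong)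
    show "degree q < card (tau ` {..<k})"
      unfolding q_def card_image[OF inj] card_lessThan
      using deg by (intro degree_sum_less le_less_trans[OF degree_smult_le] degree_lagrange_poly)
        auto
    show "degree p < card (tau ` {..<k})"
      using deg by (simp add: card_image[OF inj])
  qed
  then show ?thesis by (simp add: poly_q[symmetric])
qed

lemma sum_lagrange_eq_1:
  assumes "inj_on tau {..<k}" "0 < k"
  shows "(\<Sum>i<k. lagrange tau k i x) = 1"
  using lagrange_interpolation_exact[OF assms(1), of 1 x] assms(2) by simp

lemma inj_on_backward_nodes:
  fixes T :: "nat \<Rightarrow> real"
  assumes "strict_mono T" "k - 1 \<le> M"
  shows "inj_on (\<lambda>i. T (M - i)) {..<k}"
  using assms by (auto simp: inj_on_def strict_mono_eq)

lemma sum_atLeastAtMost_backward: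
  fixes k M :: nat
  assumes "k - 1 \<le> M" "0 < k"
  shows "(\<Sum>j\<in>{M - (k - 1)..M}. f j) = (\<Sum>i<k. f (M - i))"
  by (rule sum.reindex_bij_witness[where i = "\<lambda>i. M - i" and j = "\<lambda>j. M - j"])
    (use assms in \<open>auto simp: diff_diff_cancel intro!: arg_cong[where f = f]\<close>)

lemma ab_coeff_exact:
  assumes T: "strict_mono T" and n: "k - 1 \<le> n" and deg: "degree p < k"
  shows "(T (Suc n) - T n) * (\<Sum>i<k. ab_coeff T k n i * poly p (T (n - i)))
           = integral {T n..T (Suc n)} (poly p)"
proof -
  let ?ell = "lagrange (\<lambda>j. T (n - j)) k"
  have "T n < T (Suc n)" using T by (simp add: strict_mono_less)
  then have "(T (Suc n) - T n) * ab_coeff T k n i = integral {T n..T (Suc n)} (?ell i)" for i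
    by (simp add: ab_coeff_def)
  then have "(T (Suc n) - T n) * (\<Sum>i<k. ab_coeff T k n i * poly p (T (n - i)))
      = (\<Sum>i<k. integral {T n..T (Suc n)} (\<lambda>x. poly p (T (n - i)) * ?ell i x))"
    by (simp add: sum_distrib_left mult.assoc[symmetric] mult.commute)
  also have "\<dots> = integral {T n..T (Suc n)} (\<lambda>x. \<Sum>i<k. poly p (T (n - i)) * ?ell i x)"
    by (intro integral_sum[symmetric] integrable_continuous_interval continuous_intros
        continuous_on_lagrange) auto
  also have "\<dots> = integral {T n..T (Suc n)} (poly p)"
    by (simp add: lagrange_interpolation_exact[OF inj_on_backward_nodes[OF T n] deg])
  finally show ?thesis .
qed

lemma sum_integral_consecutive_intervals:
  fixes f :: "real \<Rightarrow> 'a::banach"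
  assumes T: "mono T" and f: "continuous_on UNIV f" and "a \<le> b"
  shows "(\<Sum>n\<in>{a..<b}. integral {T n..T (Suc n)} f) = integral {T a..T b} f"
  using \<open>a \<le> b\<close>
proof (induction b rule: dec_induct)
  case (step b)
  have "T a \<le> T b" "T b \<le> T (Suc b)"
    using step T by (auto simp: mono_def)
  then have "integral {T a..T b} f + integral {T b..T (Suc b)} f = integral {T a..T (Suc b)} f"
    by (intro Henstock_Kurzweil_Integration.integral_combine integrable_continuous_interval
        continuous_on_subset[OF f]) auto
  with step show ?case by simp
qed simp

lemma mIdx_eqI:
  assumes T: "strict_mono T" and "T j \<le> x" "x < T (Suc j)"
  shows "mIdx T x = j"
  unfolding mIdx_def
proof (rule the_equality)
  fix i assume "T i \<le> x \<and> x < T (Suc i)"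
  with assms have "T i < T (Suc j)" "T j < T (Suc i)" by auto
  then show "i = j" using T by (simp add: strict_mono_less)
qed (use assms in simp)

lemma nIdx_inverse:
  assumes "inj tt" "x \<in> range tt"
  shows "tt (nIdx tt x) = x"
  using assms unfolding nIdx_def by (auto intro: theI simp: inj_eq)

lemma PiE_fun_upd_singleton:
  assumes "s \<in> A" "j \<in> I s"
  shows "PiE A (I(s := {j})) = {q \<in> PiE A I. q s = j}"
  using assms by (auto simp: PiE_def Pi_def)

lemma sum_PiE_prod_scaleR_marginal:
  fixes h :: "'i \<Rightarrow> 'j \<Rightarrow> real" and f :: "'j \<Rightarrow> 'v::real_vector"
  assumes A: "finite A" and s: "s \<in> A" and I: "\<And>r. r \<in> A \<Longrightarrow> finite (I r)"
    and one: "\<And>r. r \<in> A - {s} \<Longrightarrow> (\<Sum>j\<in>I r. h r j) = 1"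
  shows "(\<Sum>q\<in>PiE A I. (\<Prod>r\<in>A. h r (q r)) *\<^sub>R f (q s)) = (\<Sum>j\<in>I s. h s j *\<^sub>R f j)"
proof -
  have weight: "(\<Sum>q\<in>PiE A (I(s := {j})). \<Prod>r\<in>A. h r (q r)) = h s j" for j
  proof -
    have "(\<Sum>q\<in>PiE A (I(s := {j})). \<Prod>r\<in>A. h r (q r)) = (\<Prod>r\<in>A. \<Sum>x\<in>(I(s := {j})) r. h r x)"
      using A I by (intro prod_sum_PiE[symmetric]) auto
    also have "\<dots> = h s j * (\<Prod>r\<in>A - {s}. \<Sum>x\<in>I r. h r x)"
      using A s by (simp add: prod.remove)
    also have "\<dots> = h s j"
      using one by simp
    finally show ?thesis .
  qed
  have "(\<Sum>q\<in>PiE A I. (\<Prod>r\<in>A. h r (q r)) *\<^sub>R f (q s))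
      = (\<Sum>j\<in>I s. \<Sum>q\<in>{q \<in> PiE A I. q s = j}. (\<Prod>r\<in>A. h r (q r)) *\<^sub>R f (q s))"
    using A I s by (intro sum.group[symmetric]) (auto simp: finite_PiE)
  also have "\<dots> = (\<Sum>j\<in>I s. (\<Sum>q\<in>PiE A (I(s := {j})). \<Prod>r\<in>A. h r (q r)) *\<^sub>R f j)"
    using s by (intro sum.cong) (auto simp: PiE_fun_upd_singleton scaleR_sum_left)
  finally show ?thesis by (simp add: weight)
qed

lemma lts_volume_step:
  fixes t :: "nat \<Rightarrow> nat \<Rightarrow> real" and tt :: "nat \<Rightarrow> real" and W :: "nat \<Rightarrow> 'v::real_vector"
  assumes k: "0 < k" and s: "s < S" and t: "\<forall>r<S. strict_mono (t r)" and tt: "strict_mono tt"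
    and n: "k - 1 \<le> n" and M_large: "\<forall>r<S. k - 1 \<le> mIdx (t r) (tt n)"
    and m: "mIdx (t s) (tt n) = m"
  shows "(\<Sum>q\<in>lts_qset S k t tt n. lts_beta S k t tt n q *\<^sub>R W (q s))
       = (\<Sum>j<k. integral {tt n..tt (Suc n)} (lagrange (\<lambda>i. t s (m - i)) k j) *\<^sub>R W (m - j))"
proof -
  define M where "M r = mIdx (t r) (tt n)" for r
  define I where "I = (\<lambda>r. {M r - (k - 1)..M r})"
  define w where "w x r j = lagrange (\<lambda>i. t r (M r - i)) k (M r - j) x" for x r j
  define ell where "ell j = lagrange_poly (\<lambda>i. t s (m - i)) k j" for j
  define d where "d = tt (Suc n) - tt n"
  have sum_w: "(\<Sum>j\<in>I r. w x r j) = 1" if "r < S" for x r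
  proof -
    have "(\<Sum>j\<in>I r. w x r j) = (\<Sum>i<k. lagrange (\<lambda>i. t r (M r - i)) k i x)"
      unfolding I_def w_def using that M_large k
      by (subst sum_atLeastAtMost_backward) (auto simp: M_def intro!: sum.cong)
    also have "\<dots> = 1"
      using that M_large t k by (intro sum_lagrange_eq_1 inj_on_backward_nodes) (auto simp: M_def)
    finally show ?thesis .
  qed
  have marginal: "(\<Sum>q\<in>PiE {..<S} I. (\<Prod>r<S. w x r (q r)) *\<^sub>R W (q s))
      = (\<Sum>j<k. poly (ell j) x *\<^sub>R W (m - j))" for x
  proof -
    have "(\<Sum>q\<in>PiE {..<S} I. (\<Prod>r<S. w x r (q r)) *\<^sub>R W (q s)) = (\<Sum>j\<in>I s. w x s j *\<^sub>R W j)"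
      by (intro sum_PiE_prod_scaleR_marginal) (use s sum_w in \<open>auto simp: I_def\<close>)
    also have "\<dots> = (\<Sum>j<k. poly (ell j) x *\<^sub>R W (m - j))"
      unfolding I_def using s M_large k m
      by (subst sum_atLeastAtMost_backward) (auto simp: M_def w_def ell_def intro!: sum.cong)
    finally show ?thesis .
  qed
  have "(\<Sum>q\<in>lts_qset S k t tt n. lts_beta S k t tt n q *\<^sub>R W (q s))
      = (\<Sum>q\<in>PiE {..<S} I. \<Sum>i<k. (d * ab_coeff tt k n i) *\<^sub>R
           ((\<Prod>r<S. w (tt (n - i)) r (q r)) *\<^sub>R W (q s)))"
    by (simp add: lts_beta_def lts_qset_def I_def w_def M_def d_def sum_distrib_left
        scaleR_sum_left mult.assoc)
  also have "\<dots> = (\<Sum>i<k. (d * ab_coeff tt k n i) *\<^sub>R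
           (\<Sum>q\<in>PiE {..<S} I. (\<Prod>r<S. w (tt (n - i)) r (q r)) *\<^sub>R W (q s)))"
    by (subst sum.swap) (simp only: scaleR_sum_right)
  also have "\<dots> = (\<Sum>i<k. (d * ab_coeff tt k n i) *\<^sub>R (\<Sum>j<k. poly (ell j) (tt (n - i)) *\<^sub>R W (m - j)))"
    by (simp only: marginal)
  also have "\<dots> = (\<Sum>i<k. \<Sum>j<k. (d * ab_coeff tt k n i * poly (ell j) (tt (n - i))) *\<^sub>R W (m - j))"
    by (simp add: scaleR_sum_right)
  also have "\<dots> = (\<Sum>j<k. (d * (\<Sum>i<k. ab_coeff tt k n i * poly (ell j) (tt (n - i)))) *\<^sub>R W (m - j))"
    by (subst sum.swap) (simp add: scaleR_sum_left sum_distrib_left mult.assoc)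
  also have "\<dots> = (\<Sum>j<k. integral {tt n..tt (Suc n)} (poly (ell j)) *\<^sub>R W (m - j))"
    unfolding d_def ell_def
    by (intro sum.cong refl)
      (simp add: ab_coeff_exact[OF tt n] degree_lagrange_poly del: poly_lagrange_poly)
  finally show ?thesis by (simp add: ell_def)
qed

lemma lts_volume_macro_step:
  fixes t :: "nat \<Rightarrow> nat \<Rightarrow> real" and tt :: "nat \<Rightarrow> real" and W :: "nat \<Rightarrow> 'v::real_vector"
  assumes k: "0 < k" and s: "s < S" and t: "\<forall>r<S. strict_mono (t r)" and tt: "strict_mono tt"
    and ts_tt: "range (t s) \<subseteq> range tt" and m: "k - 1 \<le> m"
    and idx_exist: "\<forall>n\<in>{nIdx tt (t s m)..<nIdx tt (t s (Suc m))}. \<forall>r<S.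
         \<exists>j. k - 1 \<le> j \<and> t r j \<le> tt n \<and> tt n < t r (Suc j)"
  shows "(\<Sum>n\<in>{nIdx tt (t s m)..<nIdx tt (t s (Suc m))}.
            \<Sum>q\<in>lts_qset S k t tt n. lts_beta S k t tt n q *\<^sub>R W (q s))
       = (t s (Suc m) - t s m) *\<^sub>R (\<Sum>j<k. ab_coeff (t s) k m j *\<^sub>R W (m - j))"
proof -
  define g where "g j = nIdx tt (t s j)" for j
  define ell where "ell j = lagrange (\<lambda>i. t s (m - i)) k j" for j
  have ts: "strict_mono (t s)" using t s by blast
  have tt_g: "tt (g j) = t s j" for j
    unfolding g_def using ts_tt by (intro nIdx_inverse strict_mono_imp_inj_on[OF tt]) auto
  have "strict_mono g"
    by (rule strict_monoI_Suc) (metis tt_g ts tt lessI strict_mono_less)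
  then have m_g: "m \<le> g m" and g_le: "g m \<le> g (Suc m)"
    by (auto simp: strict_mono_imp_increasing strict_mono_less_eq)
  have step: "(\<Sum>q\<in>lts_qset S k t tt n. lts_beta S k t tt n q *\<^sub>R W (q s))
      = (\<Sum>j<k. integral {tt n..tt (Suc n)} (ell j) *\<^sub>R W (m - j))" if n: "n \<in> {g m..<g (Suc m)}" for n
    unfolding ell_def
  proof (rule lts_volume_step[OF k s t tt])
    show "k - 1 \<le> n" using n m m_g by auto
    have "t s m \<le> tt n" "tt n < t s (Suc m)"
      using n tt tt_g by (auto simp: strict_mono_less_eq strict_mono_less simp flip: tt_g)
    then show "mIdx (t s) (tt n) = m" by (rule mIdx_eqI[OF ts])
    show "\<forall>r<S. k - 1 \<le> mIdx (t r) (tt n)"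
      using idx_exist n t unfolding g_def by (metis mIdx_eqI)
  qed
  have "(\<Sum>n\<in>{g m..<g (Suc m)}. \<Sum>q\<in>lts_qset S k t tt n. lts_beta S k t tt n q *\<^sub>R W (q s))
      = (\<Sum>j<k. (\<Sum>n\<in>{g m..<g (Suc m)}. integral {tt n..tt (Suc n)} (ell j)) *\<^sub>R W (m - j))"
    by (simp add: step sum.swap[of _ "{g m..<g (Suc m)}"] scaleR_sum_left)
  also have "\<dots> = (\<Sum>j<k. integral {t s m..t s (Suc m)} (ell j) *\<^sub>R W (m - j))"
    using g_le tt
    by (simp add: sum_integral_consecutive_intervals strict_mono_mono continuous_on_lagrange
        ell_def tt_g)
  also have "\<dots> = (t s (Suc m) - t s m) *\<^sub>R (\<Sum>j<k. ab_coeff (t s) k m j *\<^sub>R W (m - j))"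
    using ts by (simp add: scaleR_sum_right ab_coeff_def ell_def strict_mono_eq)
  finally show ?thesis by (simp add: g_def)
qed

theorem mainTheorem3:
  fixes S k s m :: nat
    and t :: "nat \<Rightarrow> nat \<Rightarrow> real"
    and tt :: "nat \<Rightarrow> real"
    and y :: "nat \<Rightarrow> nat \<Rightarrow> 'v::real_vector"
    and D B :: "nat \<Rightarrow> (nat \<Rightarrow> 'v) \<Rightarrow> 'v"
    and V :: "nat \<Rightarrow> 'v \<Rightarrow> 'v"
  assumes k_pos: "1 \<le> k"
    and s_S: "s < S"
    and t_mono: "\<forall>r<S. strict_mono (t r)"
    and tt_mono: "strict_mono tt"
    and tt_range: "range tt = (\<Union>r<S. range (t r))"
    and split: "\<forall>r<S. \<forall>ys. D r ys = V r (ys r) + B r ys"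
    and m_large: "k - 1 \<le> m"
    and idx_exist: "\<forall>n\<in>{nIdx tt (t s m)..<nIdx tt (t s (Suc m))}. \<forall>r<S.
         \<exists>j. k - 1 \<le> j \<and> t r j \<le> tt n \<and> tt n < t r (Suc j)"
    and scheme: "y s (Suc m) = y s m +
         (\<Sum>n\<in>{nIdx tt (t s m)..<nIdx tt (t s (Suc m))}.
            \<Sum>q\<in>lts_qset S k t tt n. lts_beta S k t tt n q *\<^sub>R D s (\<lambda>r. y r (q r)))"
  shows "y s (Suc m) - y s m =
         (t s (Suc m) - t s m) *\<^sub>R (\<Sum>j<k. ab_coeff (t s) k m j *\<^sub>R V s (y s (m - j)))
         + (\<Sum>n\<in>{nIdx tt (t s m)..<nIdx tt (t s (Suc m))}.
            \<Sum>q\<in>lts_qset S k t tt n. lts_beta S k t tt n q *\<^sub>R B s (\<lambda>r. y r (q r)))"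
proof -
  have "range (t s) \<subseteq> range tt" using tt_range s_S by blast
  with k_pos have volume:
    "(\<Sum>n\<in>{nIdx tt (t s m)..<nIdx tt (t s (Suc m))}.
        \<Sum>q\<in>lts_qset S k t tt n. lts_beta S k t tt n q *\<^sub>R V s (y s (q s)))
     = (t s (Suc m) - t s m) *\<^sub>R (\<Sum>j<k. ab_coeff (t s) k m j *\<^sub>R V s (y s (m - j)))"
    by (intro lts_volume_macro_step[OF _ s_S t_mono tt_mono _ m_large idx_exist]) auto
  have "D s (\<lambda>r. y r (q r)) = V s (y s (q s)) + B s (\<lambda>r. y r (q r))" for q
    using split s_S by simp
  then show ?thesis
    using scheme by (simp add: scaleR_add_right sum.distrib volume)
qed

end
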